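(* Let the Standing Assumption hold, and assume in addition that $f(z)=J(z)\eta(z)$ for all $z\in\mathbb R^n$, for some (unknown) map $J\colon\mathbb R^n\to\mathbb R^{n\times n}$ with $J(z)=-J(z)^{\mathsf T}$. Then: 1. There exists $P\colon\mathbb R^n\to\mathbb R^{n\times n}$ such that $P(z)\eta(z)=0$ and $M(z)_{\mathsf H}+P(z)_{\mathsf H}=0$ for all $z\in\mathbb R^n$. 2. Let $z\in\mathbb R^n$ satisfy $\eta(z)\ne0$ and $\eta_i(z)\neq 0$ for $i=2,\dots,n-1$. Then there is exactly one matrix $P\in\mathbb R^{n\times n}$ such that: - $P\eta(z)=0$; - $P_{\mathsf H}=-M(z)_{\mathsf H}$; - $P_{\mathsf S}$ is tridiagonal. Equivalently, the entries $p=(p_1,\dots,p_{n-1})$ of the superdiagonal of $P_{\mathsf S}$ form the unique solution of $T(\eta(z))\,p=M(z)_{\mathsf H}\,\eta(z)$. Here $T(\eta)\in\mathbb R^{n\times(n-1)}$ is the matrix whose $k$-th column has entry $\eta_{k+1}$ in row $k$, entry $-\eta_k$ in row $k+1$, and zeros elsewhere.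
   Context: Setting. Let $n,m$ be positive integers. Let $\mathcal H\colon\mathbb R^n\to\mathbb R$ be continuously differentiable with $\mathcal H\ge 0$, and set $\eta\coloneq\nabla\mathcal H\colon\mathbb R^n\to\mathbb R^n$. Let $f\colon\mathbb R^n\to\mathbb R^n$ and $B\colon\mathbb R^n\to\mathbb R^{n\times m}$. Consider the system $\dot z = f(z)+B(z)u$, $y=B(z)^{\mathsf T}\eta(z)$. Notation. For $A\in\mathbb R^{n\times n}$: $A_{\mathsf H}\coloneq\tfrac12(A+A^{\mathsf T})$ and $A_{\mathsf S}\coloneq\tfrac12(A-A^{\mathsf T})$. Property (P): there exist $p\in\mathbb N$ and $\ell\colon\mathbb R^n\to\mathbb R^p$ with $\eta(z)^{\mathsf T}f(z)=-\ell(z)^{\mathsf T}\ell(z)$ for all $z$. Standing Assumption: property (P) holds; $f,\eta$ are $C^1$; $\eta\colon\mathbb R^n\to\mathbb R^n$ is bijective; $f(\eta^{-1}(0))=0$; and $D\eta(z)$ is invertible for all $z\in\mathbb R^n$. Definition of $M$. Under the Standing Assumption $\eta^{-1}$ is $C^1$, and $M(z)\coloneq\int_0^1 D(f\circ\eta^{-1})(s\,\eta(z))\,\mathrm ds=\int_0^1 Df(\zeta_s)D\eta(\zeta_s)^{-1}\,\mathrm ds$, where $\zeta_s\coloneq\eta^{-1}(s\eta(z))$. This satisfies $f(z)=M(z)\eta(z)$ for all $z$. *)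

theory Defs
  imports "HOL-Analysis.Analysis"
begin

text \<open>Euclidean n-space is real^'n with a finite linearly ordered index type 'n;
  ix k (for 1 \<le> k \<le> CARD('n)) is the k-th index in increasing order, so that
  component i of a vector x is x $ ix i.\<close>

definition ix :: "nat \<Rightarrow> 'n::{finite,linorder}" where
  "ix k = sorted_list_of_set (UNIV :: 'n set) ! (k - 1)"

definition jac :: "(real^'n \<Rightarrow> real^'n) \<Rightarrow> real^'n \<Rightarrow> real^'n^'n" where
  "jac g z = matrix (frechet_derivative g (at z))"

definition C1_map :: "(real^'n \<Rightarrow> real^'n) \<Rightarrow> bool" where
  "C1_map g \<longleftrightarrow> (\<forall>z. g differentiable (at z)) \<and> continuous_on UNIV (jac g)"

definition herm :: "real^'n^'n \<Rightarrow> real^'n^'n" where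
  "herm A = (1/2) *\<^sub>R (A + transpose A)"

definition skew :: "real^'n^'n \<Rightarrow> real^'n^'n" where
  "skew A = (1/2) *\<^sub>R (A - transpose A)"

definition Mmat :: "(real^'n \<Rightarrow> real^'n) \<Rightarrow> (real^'n \<Rightarrow> real^'n) \<Rightarrow> real^'n \<Rightarrow> real^'n^'n" where
  "Mmat f \<eta> z = integral {0..1} (\<lambda>s::real.
     jac f (inv \<eta> (s *\<^sub>R \<eta> z)) ** matrix_inv (jac \<eta> (inv \<eta> (s *\<^sub>R \<eta> z))))"

definition tridiag :: "real^('n::{finite,linorder})^('n::{finite,linorder}) \<Rightarrow> bool" where
  "tridiag A \<longleftrightarrow> (\<forall>i\<in>{1..CARD('n)}. \<forall>j\<in>{1..CARD('n)}.
      (i + 1 < j \<or> j + 1 < i) \<longrightarrow> A $ ix i $ ix j = 0)"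

text \<open>T(e) in R^{n x (n-1)}: entry (i,k) for 1 \<le> i \<le> n, 1 \<le> k \<le> n-1.\<close>
definition Tmat :: "real^'n::{finite,linorder} \<Rightarrow> nat \<Rightarrow> nat \<Rightarrow> real" where
  "Tmat e i k = (if i = k then e $ ix (k + 1) else if i = k + 1 then - (e $ ix k) else 0)"

end

theory Submission
  imports Defs
begin

text \<open>With \<open>\<zeta>\<^sub>s = \<eta>\<^sup>-\<^sup>1(s \<eta>(z))\<close>, the fundamental theorem of calculus for \<open>s \<mapsto> f(\<zeta>\<^sub>s)\<close> on
  \<open>[0, 1]\<close> gives \<open>f(z) = M(z) \<eta>(z)\<close>. Hence \<open>P = J - M\<close> annihilates \<open>\<eta>\<close>, and its Hermitian
  part is \<open>-M\<^sub>H\<close> because \<open>J\<close> is skew.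

  For the second part let \<open>e = \<eta>(z)\<close> and \<open>V = M(z)\<^sub>H\<close>; then \<open>e \<bullet> V e = e \<bullet> M e = e \<bullet> J e = 0\<close>.
  A matrix with \<open>P e = 0\<close> and \<open>P\<^sub>H = -V\<close> is determined by its skew part \<open>S\<close>, subject only to
  \<open>S e = V e\<close>, and for tridiagonal \<open>S\<close> with superdiagonal \<open>p\<close> one has \<open>S e = T(e) p\<close>. Forward
  elimination using \<open>e\<^sub>2, \<dots>, e\<^sub>n\<^sub>-\<^sub>1 \<noteq> 0\<close> (and
  \<open>e \<noteq> 0\<close> when \<open>n = 2\<close>) shows that \<open>T(e)\<close> is injective. For existence,
  forward substitution solves all equations of \<open>T(e) p = V e\<close> but one with \<open>e\<^sub>j \<noteq> 0\<close>; that one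
  follows because both \<open>T(e) p\<close> and \<open>V e\<close> are orthogonal to \<open>e\<close>.\<close>

lemma bij_betw_ix: "bij_betw (ix :: nat \<Rightarrow> 'n::{finite,linorder}) {1..CARD('n)} UNIV"
proof -
  let ?L = "sorted_list_of_set (UNIV :: 'n set)"
  have "bij_betw ((!) ?L) {..<CARD('n)} UNIV"
    by (rule bij_betw_nth) auto
  moreover have "bij_betw (\<lambda>k::nat. k - 1) {1..CARD('n)} {..<CARD('n)}"
    by (rule bij_betwI[where g = Suc]) auto
  ultimately have "bij_betw ((!) ?L \<circ> (\<lambda>k. k - 1)) {1..CARD('n)} UNIV"
    by (rule bij_betw_trans[rotated])
  moreover have "(!) ?L \<circ> (\<lambda>k. k - 1) = ix"
    by (auto simp: ix_def)
  ultimately show ?thesis by simp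
qed

definition ixpos :: "'n::{finite,linorder} \<Rightarrow> nat" where
  "ixpos a = inv_into {1..CARD('n)} ix a"

lemma ixpos_bounds: "ixpos (a :: 'n::{finite,linorder}) \<in> {1..CARD('n)}"
  unfolding ixpos_def
  by (metis UNIV_I bij_betw_ix bij_betw_imp_surj_on inv_into_into)

lemma ix_ixpos [simp]: "ix (ixpos a) = a"
  unfolding ixpos_def by (meson UNIV_I bij_betw_ix bij_betw_inv_into_right)

lemma ixpos_ix [simp]: "k \<in> {1..CARD('n)} \<Longrightarrow> ixpos (ix k :: 'n::{finite,linorder}) = k"
  unfolding ixpos_def by (meson bij_betw_ix bij_betw_inv_into_left)

lemma sum_UNIV_ix: "(\<Sum>a\<in>UNIV. F a) = (\<Sum>k=1..CARD('n). F (ix k :: 'n::{finite,linorder}))"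
  using sum.reindex_bij_betw[OF bij_betw_ix, of F] by simp

lemma vec_eq_ixI:
  fixes x y :: "'a^'n::{finite,linorder}"
  assumes "\<And>i. i \<in> {1..CARD('n)} \<Longrightarrow> x $ ix i = y $ ix i"
  shows "x = y"
  unfolding vec_eq_iff by (metis assms ix_ixpos ixpos_bounds)

lemma ex_ix_nonzero:
  fixes x :: "real^'n::{finite,linorder}"
  assumes "x \<noteq> 0"
  obtains j where "j \<in> {1..CARD('n)}" "x $ ix j \<noteq> 0"
  using assms vec_eq_ixI[of x 0] by auto

subsection \<open>Hermitian and skew parts\<close>

lemma transpose_uminus: "transpose (- A) = - transpose A"
  by (simp add: transpose_def vec_eq_iff)

lemma transpose_herm: "transpose (herm A) = herm A"
  by (simp add: herm_def transpose_def vec_eq_iff add.commute)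

lemma herm_plus_skew: "herm A + skew A = A"
  by (simp add: herm_def skew_def vec_eq_iff algebra_simps)

lemma transpose_skew: "transpose (skew A) = - skew A"
  by (simp add: skew_def vec_eq_iff transpose_def algebra_simps)

lemma herm_diff: "herm (A - B) = herm A - herm B"
  by (simp add: herm_def vec_eq_iff transpose_def algebra_simps)

lemma skew_diff: "skew (A - B) = skew A - skew B"
  by (simp add: skew_def vec_eq_iff transpose_def algebra_simps)

lemma herm_symmetric: "transpose A = A \<Longrightarrow> herm A = A"
  by (simp add: herm_def)

lemma skew_symmetric: "transpose A = A \<Longrightarrow> skew A = 0"
  by (simp add: skew_def)

lemma herm_skew_symmetric: "transpose A = - A \<Longrightarrow> herm A = 0"
  by (simp add: herm_def)

lemma skew_skew_symmetric: "transpose A = - A \<Longrightarrow> skew A = A"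
  by (simp add: skew_def vec_eq_iff)

lemma skew_mult_completion:
  fixes P V :: "real^'n^'n"
  assumes "P *v e = 0" "herm P = - V"
  shows "skew P *v e = V *v e"
proof -
  have "0 = (herm P + skew P) *v e" using assms(1) by (simp add: herm_plus_skew)
  also have "\<dots> = skew P *v e - V *v e"
    using assms(2) by (simp add: matrix_vector_mult_add_rdistrib matrix_vector_mult_diff_rdistrib)
  finally show ?thesis by simp
qed

lemma inner_transpose_mult: "x \<bullet> (transpose A *v x) = x \<bullet> (A *v (x :: real^'n))"
proof -
  have "x \<bullet> (transpose A *v x) = (x v* A) \<bullet> x"
    by (simp add: inner_commute)
  also have "\<dots> = x \<bullet> (A *v x)"
    by (rule dot_lmul_matrix)
  finally show ?thesis .
qed

lemma inner_herm_mult: "x \<bullet> (herm A *v x) = x \<bullet> (A *v (x :: real^'n))"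
  by (simp add: herm_def scaleR_matrix_vector_assoc[symmetric] matrix_vector_mult_add_rdistrib
      inner_add_right inner_transpose_mult del: transpose_matrix_vector)

lemma inner_skew_symmetric_mult: "transpose A = - A \<Longrightarrow> x \<bullet> (A *v (x :: real^'n)) = 0"
  by (metis herm_skew_symmetric inner_herm_mult inner_zero_right matrix_vector_mult_0)

subsection \<open>The linear system \<open>T(e) q = v\<close>\<close>

definition Tmat_mult :: "real^'n::{finite,linorder} \<Rightarrow> (nat \<Rightarrow> real) \<Rightarrow> nat \<Rightarrow> real" where
  "Tmat_mult e q i = (if i + 1 \<le> CARD('n) then e $ ix (i + 1) * q i else 0)
                   - (if 2 \<le> i then e $ ix (i - 1) * q (i - 1) else 0)"

lemma sum_Tmat:
  fixes e :: "real^'n::{finite,linorder}"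
  assumes "i \<in> {1..CARD('n)}"
  shows "(\<Sum>k=1..CARD('n) - 1. Tmat e i k * q k) = Tmat_mult e q i"
proof -
  have "(\<Sum>k=1..CARD('n) - 1. Tmat e i k * q k)
      = (\<Sum>k=1..CARD('n) - 1. (if k = i then e $ ix (i + 1) * q i else 0)
                             + (if k = i - 1 then - e $ ix (i - 1) * q (i - 1) else 0))"
    using assms by (intro sum.cong) (auto simp: Tmat_def)
  also have "\<dots> = Tmat_mult e q i"
    using assms by (auto simp: sum.distrib Tmat_mult_def)
  finally show ?thesis .
qed

lemma Tmat_mult_Suc:
  "k + 2 < CARD('n) \<Longrightarrow> Tmat_mult (e :: real^'n::{finite,linorder}) q (Suc k)
     = e $ ix (k + 2) * q (Suc k) - (if 1 \<le> k then e $ ix k * q k else 0)"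
  by (simp add: Tmat_mult_def)

lemma Tmat_mult_last:
  "2 \<le> CARD('n) \<Longrightarrow> Tmat_mult (e :: real^'n::{finite,linorder}) q CARD('n)
     = - (e $ ix (CARD('n) - 1) * q (CARD('n) - 1))"
  by (simp add: Tmat_mult_def)

lemma Tmat_mult_diff: "Tmat_mult e (\<lambda>k. p k - q k) i = Tmat_mult e p i - Tmat_mult e q i"
  by (simp add: Tmat_mult_def algebra_simps)

lemma Tmat_mult_eq_0_imp_0:
  fixes e :: "real^'n::{finite,linorder}"
  assumes rows: "\<And>i. i \<in> {1..CARD('n)} \<Longrightarrow> Tmat_mult e d i = 0"
    and e_nz: "e \<noteq> 0" and inner_nz: "\<forall>i\<in>{2..CARD('n) - 1}. e $ ix i \<noteq> 0"
    and k: "k \<in> {1..CARD('n) - 1}"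
  shows "d k = 0"
proof -
  let ?N = "CARD('n)"
  have forward: "1 \<le> k \<Longrightarrow> k + 1 < ?N \<Longrightarrow> d k = 0" for k
  proof (induction k)
    case (Suc k)
    have "e $ ix (k + 2) \<noteq> 0" using inner_nz Suc.prems by auto
    moreover have "Tmat_mult e d (Suc k) = 0" using rows Suc.prems by auto
    moreover have "1 \<le> k \<Longrightarrow> d k = 0" using Suc by auto
    ultimately show ?case
      using Suc.prems by (auto simp: Tmat_mult_Suc split: if_splits)
  qed simp
  show ?thesis
  proof (cases "k + 1 < ?N")
    case True
    then show ?thesis using forward k by auto
  next
    case False
    then have k_last: "k = ?N - 1" using k by auto
    show ?thesis
    proof (cases "?N \<ge> 3")
      case True
      have "e $ ix (?N - 1) \<noteq> 0" using inner_nz True by auto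
      moreover have "Tmat_mult e d ?N = 0" using rows k by auto
      ultimately show ?thesis using True k_last by (auto simp: Tmat_mult_last)
    next
      case False
      then have "?N = 2" "k = 1" using k k_last by auto
      moreover obtain j where "j \<in> {1..?N}" "e $ ix j \<noteq> 0"
        using e_nz by (rule ex_ix_nonzero)
      moreover have "Tmat_mult e d 1 = 0" "Tmat_mult e d 2 = 0" using rows \<open>?N = 2\<close> by auto
      ultimately show ?thesis by (auto simp: Tmat_mult_def le_Suc_eq numeral_2_eq_2)
    qed
  qed
qed

lemma Tmat_mult_unique:
  fixes e :: "real^'n::{finite,linorder}"
  assumes "\<forall>i\<in>{1..CARD('n)}. Tmat_mult e p i = w i" "\<forall>i\<in>{1..CARD('n)}. Tmat_mult e q i = w i"
    and "e \<noteq> 0" "\<forall>i\<in>{2..CARD('n) - 1}. e $ ix i \<noteq> 0"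
  shows "\<forall>k\<in>{1..CARD('n) - 1}. p k = q k"
  using Tmat_mult_eq_0_imp_0[of e "\<lambda>k. p k - q k"] assms by (simp add: Tmat_mult_diff)

lemma inner_Tmat_mult:
  fixes e :: "real^'n::{finite,linorder}"
  shows "(\<Sum>i=1..CARD('n). e $ ix i * Tmat_mult e q i) = 0"
proof -
  let ?N = "CARD('n)"
  have "(\<Sum>i=1..?N. e $ ix i * Tmat_mult e q i)
      = (\<Sum>i=1..?N. (if i + 1 \<le> ?N then e $ ix i * e $ ix (i + 1) * q i else 0))
      - (\<Sum>i=1..?N. (if 2 \<le> i then e $ ix i * e $ ix (i - 1) * q (i - 1) else 0))"
    by (simp add: Tmat_mult_def sum_subtractf[symmetric] right_diff_distrib) (intro sum.cong, auto)
  also have "(\<Sum>i=1..?N. (if i + 1 \<le> ?N then e $ ix i * e $ ix (i + 1) * q i else 0))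
           = (\<Sum>i=1..?N - 1. e $ ix i * e $ ix (i + 1) * q i)"
    by (rule sum.mono_neutral_cong_right) auto
  also have "(\<Sum>i=1..?N. (if 2 \<le> i then e $ ix i * e $ ix (i - 1) * q (i - 1) else 0))
           = (\<Sum>i=2..?N. e $ ix i * e $ ix (i - 1) * q (i - 1))"
    by (rule sum.mono_neutral_cong_right) auto
  also have "\<dots> = (\<Sum>i=1..?N - 1. e $ ix (i + 1) * e $ ix i * q i)"
  proof (cases ?N)
    case (Suc m)
    then show ?thesis
      using sum.shift_bounds_cl_Suc_ivl[of "\<lambda>i. e $ ix i * e $ ix (i - 1) * q (i - 1)" 1 m]
      by (simp add: numeral_2_eq_2)
  qed simp
  finally show ?thesis by (simp add: mult.commute)
qed

lemma Tmat_mult_eq_if_eq_but_one: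
  fixes e :: "real^'n::{finite,linorder}"
  assumes j: "j \<in> {1..CARD('n)}" "e $ ix j \<noteq> 0"
    and rows: "\<And>i. i \<in> {1..CARD('n)} \<Longrightarrow> i \<noteq> j \<Longrightarrow> Tmat_mult e q i = v i"
    and orth: "(\<Sum>i=1..CARD('n). e $ ix i * v i) = 0"
  shows "\<forall>i\<in>{1..CARD('n)}. Tmat_mult e q i = v i"
proof -
  have "(\<Sum>i=1..CARD('n). e $ ix i * (Tmat_mult e q i - v i)) = 0"
    using inner_Tmat_mult[of e q] orth by (simp add: right_diff_distrib sum_subtractf)
  also have "(\<Sum>i=1..CARD('n). e $ ix i * (Tmat_mult e q i - v i))
        = (\<Sum>i=1..CARD('n). if i = j then e $ ix j * (Tmat_mult e q j - v j) else 0)"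
    using rows by (intro sum.cong) auto
  finally have "Tmat_mult e q j = v j" using j by simp
  then show ?thesis using rows by metis
qed

text \<open>Forward substitution in rows \<open>1, \<dots>, k\<close>; at \<open>k = 0\<close> the junk entry \<open>e $ ix 0\<close> is
  multiplied by \<open>0\<close>.\<close>
fun forward_solution :: "real^'n::{finite,linorder} \<Rightarrow> (nat \<Rightarrow> real) \<Rightarrow> nat \<Rightarrow> real" where
  "forward_solution e v 0 = 0"
| "forward_solution e v (Suc k) = (v (Suc k) + e $ ix k * forward_solution e v k) / e $ ix (k + 2)"

lemma Tmat_mult_solvable:
  fixes e :: "real^'n::{finite,linorder}"
  assumes e_nz: "e \<noteq> 0" and inner_nz: "\<forall>i\<in>{2..CARD('n) - 1}. e $ ix i \<noteq> 0"
    and orth: "(\<Sum>i=1..CARD('n). e $ ix i * v i) = 0"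
  shows "\<exists>q. \<forall>i\<in>{1..CARD('n)}. Tmat_mult e q i = v i"
proof (cases "CARD('n) \<ge> 3")
  case True
  let ?N = "CARD('n)"
  define q where "q k = (if k = ?N - 1 then - v ?N / e $ ix (?N - 1) else forward_solution e v k)" for k
  have last: "?N - 1 \<in> {1..?N}" "e $ ix (?N - 1) \<noteq> 0" using inner_nz True by auto
  have "Tmat_mult e q i = v i" if i: "i \<in> {1..?N}" "i \<noteq> ?N - 1" for i
  proof (cases "i = ?N")
    case True
    then show ?thesis using \<open>?N \<ge> 3\<close> last by (simp add: Tmat_mult_last q_def)
  next
    case False
    then obtain k where k: "i = Suc k" "k + 2 < ?N" using i by (cases i) auto
    have "e $ ix (k + 2) \<noteq> 0" using inner_nz k by auto
    then show ?thesis using k by (cases k) (auto simp: Tmat_mult_Suc q_def)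
  qed
  then show ?thesis using Tmat_mult_eq_if_eq_but_one[OF last _ orth] by blast
next
  case False
  obtain j where j: "j \<in> {1..CARD('n)}" "e $ ix j \<noteq> 0"
    using e_nz by (rule ex_ix_nonzero)
  define c where "c = (if j = 1 then - v 2 / e $ ix 1 else v 1 / e $ ix 2)"
  have "Tmat_mult e (\<lambda>_. c) i = v i" if "i \<in> {1..CARD('n)}" "i \<noteq> j" for i
  proof -
    from False j that consider "i = 1" "j = 2" "CARD('n) = 2" | "i = 2" "j = 1" "CARD('n) = 2"
      by fastforce
    then show ?thesis using j by cases (auto simp: Tmat_mult_def c_def numeral_2_eq_2)
  qed
  then show ?thesis using Tmat_mult_eq_if_eq_but_one[OF j _ orth] by blast
qed

subsection \<open>Tridiagonal skew completions\<close>

definition superdiag :: "real^('n::{finite,linorder})^('n::{finite,linorder}) \<Rightarrow> nat \<Rightarrow> real" where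
  "superdiag S k = S $ ix k $ ix (k + 1)"

definition skew_tridiag_of :: "(nat \<Rightarrow> real) \<Rightarrow> real^('n::{finite,linorder})^('n::{finite,linorder})" where
  "skew_tridiag_of q = (\<chi> a b.
     if ixpos b = ixpos a + 1 then q (ixpos a)
     else if ixpos a = ixpos b + 1 then - q (ixpos b) else 0)"

lemma transpose_skew_tridiag_of: "transpose (skew_tridiag_of q) = - skew_tridiag_of q"
  by (auto simp: skew_tridiag_of_def vec_eq_iff transpose_def)

lemma tridiag_skew_tridiag_of: "tridiag (skew_tridiag_of q)"
  by (auto simp: tridiag_def skew_tridiag_of_def)

lemma skew_tridiag_of_ix:
  assumes "i \<in> {1..CARD('n)}" "j \<in> {1..CARD('n)}"
  shows "(skew_tridiag_of q :: real^('n::{finite,linorder})^('n::{finite,linorder})) $ ix i $ ix j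
           = (if j = i + 1 then q i else if i = j + 1 then - q j else 0)"
  using assms by (simp add: skew_tridiag_of_def)

lemma skew_tridiag_of_superdiag:
  fixes S :: "real^('n::{finite,linorder})^('n::{finite,linorder})"
  assumes skew: "transpose S = - S" and tri: "tridiag S"
  shows "skew_tridiag_of (superdiag S) = S"
proof (rule vec_eq_ixI)+
  fix i j assume i: "i \<in> {1..CARD('n)}" and j: "j \<in> {1..CARD('n)}"
  have anti: "S $ a $ b = - S $ b $ a" for a b
    using arg_cong[OF skew, of "\<lambda>A. A $ b $ a"] by (simp add: transpose_def)
  consider "j = i + 1" | "i = j + 1" | "i = j" | "i + 1 < j \<or> j + 1 < i" by linarith
  then show "(skew_tridiag_of (superdiag S) :: ((real, 'n) vec, 'n) vec) $ ix i $ ix j = S $ ix i $ ix j"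
  proof cases
    case 1
    then show ?thesis using skew_tridiag_of_ix[OF i j] by (simp add: superdiag_def)
  next
    case 2
    then show ?thesis using skew_tridiag_of_ix[OF i j] anti[of "ix i" "ix j"] by (simp add: superdiag_def)
  next
    case 3
    then show ?thesis using skew_tridiag_of_ix[OF i j] anti[of "ix i" "ix i"] by simp
  next
    case 4
    then show ?thesis using skew_tridiag_of_ix[OF i j] tri i j by (auto simp: tridiag_def)
  qed
qed

lemma skew_tridiag_of_cong:
  assumes "\<And>k. k \<in> {1..CARD('n) - 1} \<Longrightarrow> p k = q k"
  shows "(skew_tridiag_of p :: real^('n::{finite,linorder})^('n::{finite,linorder})) = skew_tridiag_of q"
proof -
  have "p (ixpos a) = q (ixpos a)" if "ixpos b = ixpos a + 1" for a b :: 'n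
    using assms ixpos_bounds[of a] ixpos_bounds[of b] that by auto
  then show ?thesis by (auto simp: skew_tridiag_of_def vec_eq_iff)
qed

lemma skew_tridiag_of_mult:
  fixes e :: "real^'n::{finite,linorder}"
  assumes i: "i \<in> {1..CARD('n)}"
  shows "(skew_tridiag_of q *v e) $ ix i = Tmat_mult e q i"
proof -
  let ?S = "skew_tridiag_of q :: ((real, 'n) vec, 'n) vec"
  have "(?S *v e) $ ix i = (\<Sum>k=1..CARD('n). ?S $ ix i $ ix k * e $ ix k)"
    by (simp add: matrix_vector_mult_def sum_UNIV_ix)
  also have "\<dots> = (\<Sum>k=1..CARD('n). (if k = i + 1 then e $ ix (i + 1) * q i else 0)
                   - (if k = i - 1 \<and> 2 \<le> i then e $ ix (i - 1) * q (i - 1) else 0))"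
    using i by (intro sum.cong) (auto simp: skew_tridiag_of_ix)
  also have "\<dots> = Tmat_mult e q i"
    using i by (auto simp: sum_subtractf Tmat_mult_def)
  finally show ?thesis .
qed

lemma superdiag_completion_solves:
  fixes e :: "real^'n::{finite,linorder}" and P V :: "real^('n::{finite,linorder})^('n::{finite,linorder})"
  assumes "P *v e = 0" "herm P = - V" "tridiag (skew P)" "i \<in> {1..CARD('n)}"
  shows "Tmat_mult e (superdiag (skew P)) i = (V *v e) $ ix i"
proof -
  have "Tmat_mult e (superdiag (skew P)) i = (skew_tridiag_of (superdiag (skew P)) *v e) $ ix i"
    using assms(4) by (simp add: skew_tridiag_of_mult)
  also have "\<dots> = (skew P *v e) $ ix i"
    using assms(3) by (simp add: skew_tridiag_of_superdiag transpose_skew)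
  also have "\<dots> = (V *v e) $ ix i"
    using assms(1,2) by (simp add: skew_mult_completion)
  finally show ?thesis .
qed

lemma tridiag_completion_exists:
  fixes e :: "real^'n::{finite,linorder}" and V :: "real^('n::{finite,linorder})^('n::{finite,linorder})"
  assumes sym: "transpose V = V" and orth: "e \<bullet> (V *v e) = 0"
    and e_nz: "e \<noteq> 0" and inner_nz: "\<forall>i\<in>{2..CARD('n) - 1}. e $ ix i \<noteq> 0"
  shows "\<exists>P. P *v e = 0 \<and> herm P = - V \<and> tridiag (skew P)"
proof -
  have "(\<Sum>i=1..CARD('n). e $ ix i * (V *v e) $ ix i) = 0"
    using orth by (simp add: inner_vec_def sum_UNIV_ix)
  from Tmat_mult_solvable[OF e_nz inner_nz this]
  obtain q where q: "\<forall>i\<in>{1..CARD('n)}. Tmat_mult e q i = (V *v e) $ ix i"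
    by blast
  define S :: "real^('n::{finite,linorder})^('n::{finite,linorder})" where "S = skew_tridiag_of q"
  have "S *v e = V *v e"
    by (rule vec_eq_ixI) (simp add: S_def skew_tridiag_of_mult q)
  moreover have "herm S = 0" "skew S = S"
    unfolding S_def by (simp_all add: transpose_skew_tridiag_of herm_skew_symmetric skew_skew_symmetric)
  ultimately have "(S - V) *v e = 0 \<and> herm (S - V) = - V \<and> tridiag (skew (S - V))"
    using sym by (simp add: matrix_vector_mult_diff_rdistrib herm_diff skew_diff herm_symmetric
        skew_symmetric S_def tridiag_skew_tridiag_of)
  then show ?thesis ..
qed

lemma tridiag_completion_unique:
  fixes e :: "real^'n::{finite,linorder}" and P Q V :: "real^('n::{finite,linorder})^('n::{finite,linorder})"
  assumes e_nz: "e \<noteq> 0" and inner_nz: "\<forall>i\<in>{2..CARD('n) - 1}. e $ ix i \<noteq> 0"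
    and P: "P *v e = 0" "herm P = - V" "tridiag (skew P)"
    and Q: "Q *v e = 0" "herm Q = - V" "tridiag (skew Q)"
  shows "P = Q"
proof -
  have "\<forall>k\<in>{1..CARD('n) - 1}. superdiag (skew P) k = superdiag (skew Q) k"
    using superdiag_completion_solves[OF P] superdiag_completion_solves[OF Q]
    by (intro Tmat_mult_unique[OF _ _ e_nz inner_nz]) auto
  then have "(skew_tridiag_of (superdiag (skew P)) :: ((real, 'n) vec, 'n) vec)
      = skew_tridiag_of (superdiag (skew Q))"
    by (intro skew_tridiag_of_cong) auto
  then have "skew P = skew Q"
    using P(3) Q(3) by (simp add: skew_tridiag_of_superdiag transpose_skew)
  then show ?thesis
    using P(2) Q(2) herm_plus_skew[of P] herm_plus_skew[of Q] by simp
qed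

lemma tridiag_completion:
  fixes e :: "real^'n::{finite,linorder}" and V :: "real^('n::{finite,linorder})^('n::{finite,linorder})"
  assumes sym: "transpose V = V" and orth: "e \<bullet> (V *v e) = 0"
    and e_nz: "e \<noteq> 0" and inner_nz: "\<forall>i\<in>{2..CARD('n) - 1}. e $ ix i \<noteq> 0"
  shows "(\<exists>!P. P *v e = 0 \<and> herm P = - V \<and> tridiag (skew P))
       \<and> (\<forall>P. P *v e = 0 \<and> herm P = - V \<and> tridiag (skew P) \<longrightarrow>
               (\<forall>i\<in>{1..CARD('n)}. (\<Sum>k=1..CARD('n) - 1.
                   Tmat e i k * skew P $ ix k $ ix (k + 1)) = (V *v e) $ ix i)
             \<and> (\<forall>q :: nat \<Rightarrow> real.
                  (\<forall>i\<in>{1..CARD('n)}. (\<Sum>k=1..CARD('n) - 1. Tmat e i k * q k) = (V *v e) $ ix i)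
                  \<longrightarrow> (\<forall>k\<in>{1..CARD('n) - 1}. q k = skew P $ ix k $ ix (k + 1))))"
proof (intro conjI allI impI)
  show "\<exists>!P. P *v e = 0 \<and> herm P = - V \<and> tridiag (skew P)"
    using tridiag_completion_exists[OF sym orth e_nz inner_nz]
      tridiag_completion_unique[OF e_nz inner_nz] by blast
  fix P assume P: "P *v e = 0 \<and> herm P = - V \<and> tridiag (skew P)"
  then have solves: "\<forall>i\<in>{1..CARD('n)}. Tmat_mult e (superdiag (skew P)) i = (V *v e) $ ix i"
    using superdiag_completion_solves by blast
  then show "\<forall>i\<in>{1..CARD('n)}. (\<Sum>k=1..CARD('n) - 1.
                   Tmat e i k * skew P $ ix k $ ix (k + 1)) = (V *v e) $ ix i"
    using sum_Tmat[of _ e "superdiag (skew P)"] by (simp add: superdiag_def)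
  fix q assume "\<forall>i\<in>{1..CARD('n)}. (\<Sum>k=1..CARD('n) - 1. Tmat e i k * q k) = (V *v e) $ ix i"
  then have "\<forall>i\<in>{1..CARD('n)}. Tmat_mult e q i = (V *v e) $ ix i"
    using sum_Tmat[of _ e q] by simp
  from Tmat_mult_unique[OF this solves e_nz inner_nz]
  show "\<forall>k\<in>{1..CARD('n) - 1}. q k = skew P $ ix k $ ix (k + 1)"
    by (simp add: superdiag_def)
qed

subsection \<open>The matrix \<open>M\<close>\<close>

lemma has_derivative_jac:
  fixes g :: "real^'n \<Rightarrow> real^'n"
  assumes "g differentiable (at z)"
  shows "(g has_derivative (\<lambda>v. jac g z *v v)) (at z)"
proof -
  have deriv: "(g has_derivative frechet_derivative g (at z)) (at z)"
    using assms frechet_derivative_works by blast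
  then have "linear (frechet_derivative g (at z))"
    using has_derivative_linear by blast
  then have "(\<lambda>v. jac g z *v v) = frechet_derivative g (at z)"
    unfolding jac_def by (simp add: matrix_works fun_eq_iff)
  with deriv show ?thesis by simp
qed

lemma matrix_mul_matrix_inv:
  fixes A :: "real^'n^'n"
  assumes "invertible A"
  shows "A ** matrix_inv A = mat 1"
proof -
  have "A ** matrix_inv A = mat 1 \<and> matrix_inv A ** A = mat 1"
    using assms unfolding invertible_def matrix_inv_def by (rule someI_ex)
  then show ?thesis ..
qed

lemma continuous_on_det:
  fixes F :: "'a::topological_space \<Rightarrow> real^'n^'n"
  assumes "continuous_on S F"
  shows "continuous_on S (\<lambda>x. det (F x))"
  unfolding det_def by (intro continuous_intros continuous_on_component assms)

lemma matrix_inv_cramer: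
  fixes A :: "real^'n^'n"
  assumes "invertible A"
  shows "matrix_inv A $ i $ k = det (\<chi> a b. if b = i then axis k 1 $ a else A $ a $ b) / det A"
proof -
  have "A *v (matrix_inv A *v axis k 1) = axis k 1"
    using matrix_mul_matrix_inv[OF assms] by (simp add: matrix_vector_mul_assoc)
  then have "matrix_inv A *v axis k 1
      = (\<chi> j. det (\<chi> a b. if b = j then axis k 1 $ a else A $ a $ b) / det A)"
    using cramer assms invertible_det_nz by blast
  moreover have "(matrix_inv A *v axis k 1) $ i = matrix_inv A $ i $ k"
    by (simp add: matrix_vector_mult_basis column_def)
  ultimately show ?thesis by simp
qed

lemma continuous_on_matrix_inv:
  fixes F :: "'a::topological_space \<Rightarrow> real^'n^'n"
  assumes cont: "continuous_on S F" and inv: "\<And>x. x \<in> S \<Longrightarrow> invertible (F x)"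
  shows "continuous_on S (\<lambda>x. matrix_inv (F x))"
proof -
  let ?cramer = "\<lambda>x. \<chi> i k. det (\<chi> a b. if b = i then axis k 1 $ a else F x $ a $ b) / det (F x)"
  have "continuous_on S (\<lambda>x. ?cramer x :: real^'n^'n)"
  proof (intro continuous_on_vec_lambda continuous_on_divide continuous_on_det)
    fix i k a b
    show "continuous_on S (\<lambda>x. if b = i then axis k 1 $ a else F x $ a $ b)"
      by (cases "b = i") (auto intro!: continuous_on_component cont)
  qed (use cont inv invertible_det_nz in auto)
  moreover have "x \<in> S \<Longrightarrow> matrix_inv (F x) = ?cramer x" for x
    by (simp add: vec_eq_iff matrix_inv_cramer inv)
  ultimately show ?thesis using continuous_on_cong by fastforce
qed

lemma has_derivative_inv_C1:
  fixes \<eta> :: "real^'n \<Rightarrow> real^'n"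
  assumes C1: "C1_map \<eta>" and bij: "bij \<eta>" and inv: "\<And>z. invertible (jac \<eta> z)"
  shows "(inv \<eta> has_derivative (\<lambda>v. matrix_inv (jac \<eta> (inv \<eta> y)) *v v)) (at y)"
proof -
  let ?x = "inv \<eta> y"
  have cont: "continuous_on UNIV \<eta>"
    using C1 unfolding C1_map_def
    by (simp add: differentiable_imp_continuous_on differentiable_on_def differentiable_at_withinI)
  have deriv: "(\<eta> has_derivative (\<lambda>v. jac \<eta> ?x *v v)) (at ?x)"
    using C1 unfolding C1_map_def by (simp add: has_derivative_jac)
  have right_inverse: "(\<lambda>v. jac \<eta> ?x *v v) \<circ> (\<lambda>v. matrix_inv (jac \<eta> ?x) *v v) = id"
    using matrix_mul_matrix_inv[OF inv] by (auto simp: matrix_vector_mul_assoc)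
  have "(inv \<eta> has_derivative (\<lambda>v. matrix_inv (jac \<eta> ?x) *v v)) (at (\<eta> ?x))"
    by (rule has_derivative_inverse_strong[OF open_UNIV UNIV_I cont _ deriv right_inverse])
      (simp add: bij bij_is_inj)
  then show ?thesis
    using bij by (simp add: bij_is_surj surj_f_inv_f)
qed

lemma integral_matrix_vector_mult:
  fixes A :: "real \<Rightarrow> real^'n^'m"
  assumes "A integrable_on S"
  shows "integral S (\<lambda>s. A s *v x) = integral S A *v x"
proof -
  have "bounded_linear (\<lambda>B :: real^'n^'m. B *v x)"
    by (simp add: bounded_linearI' matrix_vector_mult_add_rdistrib scaleR_matrix_vector_assoc)
  from integral_linear[OF assms this] show ?thesis by (simp add: o_def)
qed

lemma continuous_on_Mmat_integrand:
  fixes \<eta> f :: "real^'n \<Rightarrow> real^'n"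
  assumes f_C1: "C1_map f" and eta_C1: "C1_map \<eta>" and bij: "bij \<eta>"
    and inv: "\<And>z. invertible (jac \<eta> z)"
  shows "continuous_on UNIV (\<lambda>s::real.
           jac f (inv \<eta> (s *\<^sub>R \<eta> z)) ** matrix_inv (jac \<eta> (inv \<eta> (s *\<^sub>R \<eta> z))))"
proof -
  define \<zeta> where "\<zeta> = (\<lambda>s::real. inv \<eta> (s *\<^sub>R \<eta> z))"
  have cinv: "continuous_on UNIV (inv \<eta>)"
    using has_derivative_inv_C1[OF eta_C1 bij inv]
    by (meson continuous_at_imp_continuous_on has_derivative_continuous)
  have \<zeta>: "continuous_on UNIV \<zeta>"
    unfolding \<zeta>_def by (intro continuous_on_compose2[OF cinv] continuous_intros) auto
  have "continuous_on UNIV (\<lambda>s. jac f (\<zeta> s) ** matrix_inv (jac \<eta> (\<zeta> s)))"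
    unfolding matrix_matrix_mult_def
  proof (intro continuous_on_vec_lambda continuous_on_sum continuous_on_mult continuous_on_component)
    show "continuous_on UNIV (\<lambda>s. jac f (\<zeta> s))"
      using f_C1 unfolding C1_map_def by (intro continuous_on_compose2[OF _ \<zeta>]) auto
    show "continuous_on UNIV (\<lambda>s. matrix_inv (jac \<eta> (\<zeta> s)))"
      using eta_C1 unfolding C1_map_def
      by (intro continuous_on_matrix_inv continuous_on_compose2[OF _ \<zeta>] inv) auto
  qed
  then show ?thesis by (simp add: \<zeta>_def)
qed

lemma Mmat_mult_eta:
  fixes \<eta> f :: "real^'n \<Rightarrow> real^'n"
  assumes f_C1: "C1_map f" and eta_C1: "C1_map \<eta>" and bij: "bij \<eta>"
    and f_zero: "f (inv \<eta> 0) = 0" and inv: "\<And>z. invertible (jac \<eta> z)"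
  shows "f z = Mmat f \<eta> z *v \<eta> z"
proof -
  define \<zeta> where "\<zeta> = (\<lambda>s::real. inv \<eta> (s *\<^sub>R \<eta> z))"
  define A where "A = (\<lambda>s. jac f (\<zeta> s) ** matrix_inv (jac \<eta> (\<zeta> s)))"
  have "((\<lambda>s. f (\<zeta> s)) has_vector_derivative (A s *v \<eta> z)) (at s)" for s
  proof -
    have "((\<lambda>s. s *\<^sub>R \<eta> z) has_derivative (\<lambda>t. t *\<^sub>R \<eta> z)) (at s)"
      by (intro derivative_eq_intros) auto
    from has_derivative_compose[OF this has_derivative_inv_C1[OF eta_C1 bij inv]]
    have d\<zeta>: "(\<zeta> has_derivative (\<lambda>t. matrix_inv (jac \<eta> (\<zeta> s)) *v (t *\<^sub>R \<eta> z))) (at s)"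
      by (simp add: \<zeta>_def o_def)
    have df: "(f has_derivative (\<lambda>v. jac f (\<zeta> s) *v v)) (at (\<zeta> s))"
      using f_C1 unfolding C1_map_def by (simp add: has_derivative_jac)
    from has_derivative_compose[OF d\<zeta> df] show ?thesis
      by (simp add: has_vector_derivative_def A_def o_def matrix_vector_mul_assoc
          matrix_vector_mult_scaleR)
  qed
  then have "((\<lambda>s. A s *v \<eta> z) has_integral (f (\<zeta> 1) - f (\<zeta> 0))) {0..1}"
    by (intro fundamental_theorem_of_calculus) (auto intro: has_vector_derivative_at_within)
  moreover have "f (\<zeta> 1) = f z" "f (\<zeta> 0) = 0"
    using bij f_zero by (simp_all add: \<zeta>_def bij_is_inj)
  ultimately have "integral {0..1} (\<lambda>s. A s *v \<eta> z) = f z"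
    by (simp add: integral_unique)
  moreover have "A integrable_on {0..1}"
  proof (rule integrable_continuous_interval, rule continuous_on_subset)
    show "continuous_on UNIV A"
      using continuous_on_Mmat_integrand[OF f_C1 eta_C1 bij inv, of z] by (simp add: A_def \<zeta>_def)
  qed simp
  ultimately have "f z = integral {0..1} A *v \<eta> z"
    by (simp add: integral_matrix_vector_mult)
  then show ?thesis
    by (simp add: Mmat_def A_def \<zeta>_def)
qed

theorem mainTheorem6:
  fixes H :: "real^('n::{finite,linorder}) \<Rightarrow> real"
    and \<eta> f :: "real^('n::{finite,linorder}) \<Rightarrow> real^('n::{finite,linorder})"
    and B :: "real^('n::{finite,linorder}) \<Rightarrow> real^'m^('n::{finite,linorder})"
    and J :: "real^('n::{finite,linorder}) \<Rightarrow> real^('n::{finite,linorder})^('n::{finite,linorder})"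
  assumes H_nonneg: "\<And>z. H z \<ge> 0"
    and H_grad: "\<And>z. (H has_derivative (\<lambda>v. \<eta> z \<bullet> v)) (at z)"
    and P_prop: "\<exists>(p::nat) l.
                   \<forall>z. \<eta> z \<bullet> f z = - (\<Sum>i<p. (l z i)\<^sup>2)"
    and f_C1: "C1_map f"
    and eta_C1: "C1_map \<eta>"
    and eta_bij: "bij \<eta>"
    and f_zero: "f (inv \<eta> 0) = 0"
    and Deta_inv: "\<And>z. invertible (jac \<eta> z)"
    and J_skew: "\<And>z. J z = - transpose (J z)"
    and f_J: "\<And>z. f z = J z *v \<eta> z"
  shows "(\<exists>P. \<forall>z.
            P z *v \<eta> z = 0 \<and> herm (Mmat f \<eta> z) + herm (P z) = 0)
       \<and> (\<forall>z. \<eta> z \<noteq> 0 \<and> (\<forall>i\<in>{2..CARD('n) - 1}. \<eta> z $ ix i \<noteq> 0) \<longrightarrow>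
            (\<exists>!P. P *v \<eta> z = 0 \<and> herm P = - herm (Mmat f \<eta> z)
                                 \<and> tridiag (skew P))
          \<and> (\<forall>P. P *v \<eta> z = 0 \<and> herm P = - herm (Mmat f \<eta> z)
                                 \<and> tridiag (skew P) \<longrightarrow>
               (\<forall>i\<in>{1..CARD('n)}. (\<Sum>k=1..CARD('n) - 1.
                   Tmat (\<eta> z) i k * skew P $ ix k $ ix (k + 1))
                 = (herm (Mmat f \<eta> z) *v \<eta> z) $ ix i)
             \<and> (\<forall>q :: nat \<Rightarrow> real.
                  (\<forall>i\<in>{1..CARD('n)}. (\<Sum>k=1..CARD('n) - 1. Tmat (\<eta> z) i k * q k)
                     = (herm (Mmat f \<eta> z) *v \<eta> z) $ ix i)
                  \<longrightarrow> (\<forall>k\<in>{1..CARD('n) - 1}. q k = skew P $ ix k $ ix (k + 1)))))"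
proof -
  have f_M: "f z = Mmat f \<eta> z *v \<eta> z" for z
    using Mmat_mult_eta[OF f_C1 eta_C1 eta_bij f_zero Deta_inv] .
  have J_transpose: "transpose (J z) = - J z" for z
    using arg_cong[OF J_skew[of z], of transpose] by (simp add: transpose_uminus)
  have part1: "\<exists>P. \<forall>z. P z *v \<eta> z = 0 \<and> herm (Mmat f \<eta> z) + herm (P z) = 0"
  proof (intro exI allI conjI)
    fix z
    show "(J z - Mmat f \<eta> z) *v \<eta> z = 0"
      using f_J[of z] f_M[of z] by (simp add: matrix_vector_mult_diff_rdistrib)
    show "herm (Mmat f \<eta> z) + herm (J z - Mmat f \<eta> z) = 0"
      using herm_skew_symmetric[OF J_transpose] by (simp add: herm_diff)
  qed
  have orth: "\<eta> z \<bullet> (herm (Mmat f \<eta> z) *v \<eta> z) = 0" for z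
    using inner_skew_symmetric_mult[OF J_transpose] f_J[of z] f_M[of z] by (simp add: inner_herm_mult)
  show ?thesis
    by (rule conjI[OF part1], intro allI impI, rule tridiag_completion[OF transpose_herm orth]) auto
qed

end
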